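(* Assume the scores are produced by a symmetric transformation. For $k\in[K^*+1]$ and $i\in(\tau^*_{k-1},\tau^*_k]$ let $R^k_i=|\{j\in(\tau^*_{k-1},\tau^*_k]:S_j\le S_i\}|$ be the rank of $S_i$ within its segment. Then the vectors $(R^k_i)_{i\in(\tau^*_{k-1},\tau^*_k]}$, $k\in[K^*+1]$, are mutually independent, and the concatenated vector $\widetilde R=(R^1_1,\ldots,R^1_{\tau^*_1},R^2_{\tau^*_1+1},\ldots,R^2_{\tau^*_2},\ldots,R^{K^*+1}_{\tau^*_{K^*}+1},\ldots,R^{K^*+1}_n)$ has the same distribution under the true law $\mathbb{P}^*$ as under $H_0$ (i.e. when $Z_1,\ldots,Z_n$ are i.i.d. with an arbitrary law).
   Context: Data: independent $Z_1,\ldots,Z_n$ in a measurable space $\mathcal{Z}$, $\mathcal{D}=(Z_1,\ldots,Z_n)$, with joint law $\mathbb{P}^*$ and $K^*\ge0$ changepoints $0=\tau^*_0<\tau^*_1<\cdots<\tau^*_{K^*}<\tau^*_{K^*+1}=n$: the $Z_i$, $i\in(\tau^*_{k-1},\tau^*_k]$, are identically distributed with law $P^*_k$, $P^*_{k+1}\ne P^*_k$. $H_0$ means $K^*=0$. A measurable $\mathbb{S}:\mathcal{Z}\times\mathcal{Z}^n\to\mathbb{R}$ is a symmetric transformation if $\mathbb{S}(z;\mathcal{D})=\mathbb{S}(z;\mathcal{D}_\pi)$ for all $z$ and all permutations $\pi$ of $[n]$, $\mathcal{D}_\pi=(Z_{\pi(1)},\ldots,Z_{\pi(n)})$. Scores: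 $S_i=\mathbb{S}(Z_i;\mathcal{D})+\epsilon e_i$, fixed $\epsilon>0$, $e_i$ i.i.d. $\mathcal{N}(0,1)$ independent of the data. *)

theory Defs
  imports "HOL-Probability.Probability"
begin

text \<open>Observations are indexed by 1..n. Changepoints tau 0 = 0 < tau 1 < ... < tau (K+1) = n.
  Segment k (k in 1..K+1) is the index set (tau (k-1), tau k].\<close>

definition seg :: "(nat \<Rightarrow> nat) \<Rightarrow> nat \<Rightarrow> nat set" where
  "seg \<tau> k = {\<tau> (k - 1)<..\<tau> k}"

definition segment_of :: "(nat \<Rightarrow> nat) \<Rightarrow> nat \<Rightarrow> nat \<Rightarrow> nat" where
  "segment_of \<tau> K i = (THE k. k \<in> {1..K+1} \<and> i \<in> seg \<tau> k)"

text \<open>Symmetric transformation of the data set (Z_1,...,Z_n), represented as an (extensional)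
  function on {1..n}.\<close>
definition symmetric_transformation ::
  "'z measure \<Rightarrow> nat \<Rightarrow> ('z \<Rightarrow> (nat \<Rightarrow> 'z) \<Rightarrow> real) \<Rightarrow> bool" where
  "symmetric_transformation M n S \<longleftrightarrow>
     (\<lambda>(z, D). S z D) \<in> borel_measurable (M \<Otimes>\<^sub>M PiM {1..n} (\<lambda>_. M)) \<and>
     (\<forall>z D \<pi>. \<pi> permutes {1..n} \<longrightarrow> S z (D \<circ> \<pi>) = S z D)"

text \<open>Joint probability space of data and noise: data law Pi_i L_i, noise i.i.d. N(0,1),
  independent of the data. Outcomes are pairs (Z, e).\<close>
definition sample_space :: "nat \<Rightarrow> (nat \<Rightarrow> 'z measure) \<Rightarrow> ((nat \<Rightarrow> 'z) \<times> (nat \<Rightarrow> real)) measure" where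
  "sample_space n L = PiM {1..n} L \<Otimes>\<^sub>M PiM {1..n} (\<lambda>_. density lborel std_normal_density)"

definition score :: "('z \<Rightarrow> (nat \<Rightarrow> 'z) \<Rightarrow> real) \<Rightarrow> real \<Rightarrow> (nat \<Rightarrow> 'z) \<times> (nat \<Rightarrow> real) \<Rightarrow> nat \<Rightarrow> real" where
  "score S \<epsilon> \<omega> i = S (fst \<omega> i) (fst \<omega>) + \<epsilon> * snd \<omega> i"

definition seg_rank :: "('z \<Rightarrow> (nat \<Rightarrow> 'z) \<Rightarrow> real) \<Rightarrow> real \<Rightarrow> (nat \<Rightarrow> nat) \<Rightarrow> nat \<Rightarrow>
    (nat \<Rightarrow> 'z) \<times> (nat \<Rightarrow> real) \<Rightarrow> nat \<Rightarrow> nat" where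
  "seg_rank S \<epsilon> \<tau> k \<omega> i = card {j \<in> seg \<tau> k. score S \<epsilon> \<omega> j \<le> score S \<epsilon> \<omega> i}"

definition rank_vec :: "('z \<Rightarrow> (nat \<Rightarrow> 'z) \<Rightarrow> real) \<Rightarrow> real \<Rightarrow> (nat \<Rightarrow> nat) \<Rightarrow> nat \<Rightarrow>
    (nat \<Rightarrow> 'z) \<times> (nat \<Rightarrow> real) \<Rightarrow> nat \<Rightarrow> nat" where
  "rank_vec S \<epsilon> \<tau> k \<omega> = (\<lambda>i\<in>seg \<tau> k. seg_rank S \<epsilon> \<tau> k \<omega> i)"

definition concat_rank :: "('z \<Rightarrow> (nat \<Rightarrow> 'z) \<Rightarrow> real) \<Rightarrow> real \<Rightarrow> (nat \<Rightarrow> nat) \<Rightarrow> nat \<Rightarrow> nat \<Rightarrow>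
    (nat \<Rightarrow> 'z) \<times> (nat \<Rightarrow> real) \<Rightarrow> nat \<Rightarrow> nat" where
  "concat_rank S \<epsilon> \<tau> K n \<omega> = (\<lambda>i\<in>{1..n}. seg_rank S \<epsilon> \<tau> (segment_of \<tau> K i) \<omega> i)"

end

theory Submission
  imports Defs
begin

text \<open>
  Because the Gaussian noise has no atoms, almost surely no two scores tie, so the vector of
  within-segment ranks is a tuple of bijections from each segment onto 1, ..., its length.
  Permuting observations inside segments preserves the law of data and noise, and since the
  transformation is symmetric it permutes the ranks in the same way; these permutations act
  transitively on the tuples of bijections. Hence the joint rank vector is uniformly distributed
  on a product of finite sets, whatever the segment laws are: its segment components are
  independent, and its law, like that of the concatenated ranks, is the one under the null.
\<close>

section \<open>Ranks, null sets and uniform laws\<close>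

lemma bij_betw_rank:
  fixes s :: "'a \<Rightarrow> 'b::linorder"
  assumes fin: "finite A" and inj: "inj_on s A"
  shows "bij_betw (\<lambda>i. card {j\<in>A. s j \<le> s i}) A {1..card A}"
proof -
  let ?r = "\<lambda>i. card {j\<in>A. s j \<le> s i}"
  have less: "?r x < ?r y" if "y \<in> A" "s x < s y" for x y
  proof -
    have "{j\<in>A. s j \<le> s x} \<subset> {j\<in>A. s j \<le> s y}" using that by force
    then show ?thesis using fin by (intro psubset_card_mono) auto
  qed
  have inj_r: "inj_on ?r A"
  proof (rule inj_onI)
    fix x y assume "x \<in> A" "y \<in> A" "?r x = ?r y"
    then show "x = y"
      using less[of y x] less[of x y] inj_onD[OF inj] by (cases "s x" "s y" rule: linorder_cases) auto
  qed
  have "?r i \<in> {1..card A}" if "i \<in> A" for i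
  proof -
    have "{j\<in>A. s j \<le> s i} \<noteq> {}" using that by blast
    then have "1 \<le> ?r i" using fin by (simp add: Suc_le_eq card_gt_0_iff)
    moreover have "?r i \<le> card A" using fin by (intro card_mono) auto
    ultimately show ?thesis by simp
  qed
  then have "?r ` A = {1..card A}"
    using card_image[OF inj_r] by (intro card_subset_eq) auto
  with inj_r show ?thesis by (simp add: bij_betw_def)
qed

lemma card_filter_bij_betw:
  assumes "bij_betw f A A"
  shows "card {x\<in>A. Q (f x)} = card {x\<in>A. Q x}"
proof -
  have "f ` {x\<in>A. Q (f x)} = {x\<in>A. Q x}"
  proof (intro equalityI subsetI)
    fix y assume "y \<in> {x\<in>A. Q x}"
    moreover then obtain x where "x \<in> A" "y = f x"
      using bij_betw_imp_surj_on[OF assms] by blast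
    ultimately show "y \<in> f ` {x\<in>A. Q (f x)}" by blast
  qed (use bij_betw_apply[OF assms] in auto)
  then show ?thesis
    using bij_betw_same_card[OF bij_betw_subset[OF assms]] by simp
qed

lemma singleton_in_sets_PiM:
  assumes "finite I" "x \<in> space (PiM I M)" "\<And>i. i \<in> I \<Longrightarrow> {x i} \<in> sets (M i)"
  shows "{x} \<in> sets (PiM I M)"
proof -
  have "x \<in> extensional I" using assms(2) by (simp add: space_PiM PiE_iff)
  then have "{x} = PiE I (\<lambda>i. {x i})" by (rule PiE_singleton[symmetric])
  then show ?thesis using assms(1,3) by (simp add: sets_PiM_I_finite)
qed

lemma emeasure_std_normal_singleton: "emeasure std_normal_distribution {a} = 0"
proof -
  have "emeasure std_normal_distribution {a}
      = (\<integral>\<^sup>+x. ennreal (std_normal_density x) * indicator {a} x \<partial>lborel)"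
    by (rule emeasure_density) auto
  also have "\<dots> = 0" by (rule nn_integral_null_set) auto
  finally show ?thesis .
qed

lemma PiM_shifted_diagonal_null:
  fixes N :: "real measure"
  assumes I: "finite I" "i \<in> I" "j \<in> I" "i \<noteq> j"
    and N: "prob_space N" "sets N = sets borel" "\<And>a. emeasure N {a} = 0"
  shows "{e \<in> space (PiM I (\<lambda>_. N)). e i = e j + c} \<in> null_sets (PiM I (\<lambda>_. N))"
proof -
  interpret product_sigma_finite "\<lambda>_. N"
    unfolding product_sigma_finite_def using N(1) prob_space_imp_sigma_finite by blast
  define I' where "I' = I - {i}"
  have I': "I = insert i I'" "finite I'" "i \<notin> I'" "j \<in> I'" using I by (auto simp: I'_def)
  define A where "A = {e \<in> space (PiM I (\<lambda>_. N)). e i = e j + c}"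
  note N(2)[measurable_cong]
  have A_sets: "A \<in> sets (PiM I (\<lambda>_. N))"
    unfolding A_def using I by measurable
  have slice: "(\<integral>\<^sup>+ y. indicator A (x(i := y)) \<partial>N) = 0" if x: "x \<in> space (PiM I' (\<lambda>_. N))" for x
  proof -
    have "x(i := y) \<in> space (PiM I (\<lambda>_. N))" if "y \<in> space N" for y
      using x I' that by (auto simp: space_PiM PiE_def extensional_def)
    then have "(\<integral>\<^sup>+ y. indicator A (x(i := y)) \<partial>N) = (\<integral>\<^sup>+ y. indicator {x j + c} y \<partial>N)"
      unfolding A_def using I' I(4) by (intro nn_integral_cong) (auto simp: indicator_def)
    then show ?thesis using N(3) by simp
  qed
  have "emeasure (PiM I (\<lambda>_. N)) A = (\<integral>\<^sup>+e. indicator A e \<partial>PiM (insert i I') (\<lambda>_. N))"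
    using A_sets I'(1) by simp
  also have "\<dots> = (\<integral>\<^sup>+ x. (\<integral>\<^sup>+ y. indicator A (x(i := y)) \<partial>N) \<partial>(PiM I' (\<lambda>_. N)))"
    by (rule product_nn_integral_insert) (use I' A_sets in auto)
  also have "\<dots> = (\<integral>\<^sup>+ x. 0 \<partial>(PiM I' (\<lambda>_. N)))"
    by (rule nn_integral_cong) (rule slice)
  also have "\<dots> = 0" by simp
  finally show ?thesis using A_sets unfolding A_def by auto
qed

lemma (in prob_space) prob_vimage_uniform_by_symmetry:
  assumes A: "finite A" "\<And>p. p \<in> A \<Longrightarrow> {p} \<in> sets N"
    and X: "X \<in> measurable M N" and AE_A: "AE x in M. X x \<in> A"
    and sym: "\<And>p q. p \<in> A \<Longrightarrow> q \<in> A \<Longrightarrow> \<exists>T \<in> measurable M M. distr M M T = M \<and>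
                (\<forall>x \<in> space M. X (T x) = p \<longleftrightarrow> X x = q)"
    and B: "B \<in> sets N"
  shows "prob (X -` B \<inter> space M) = card (B \<inter> A) / card A"
proof -
  define E where "E p = X -` {p} \<inter> space M" for p
  have E_sets: "E p \<in> events" if "p \<in> A" for p
    unfolding E_def using measurable_sets[OF X A(2)[OF that]] .
  have E_eq: "prob (E q) = prob (E p)" if p: "p \<in> A" and q: "q \<in> A" for p q
  proof -
    obtain T where T: "T \<in> measurable M M" "distr M M T = M"
      and XT: "\<forall>x \<in> space M. X (T x) = p \<longleftrightarrow> X x = q"
      using sym[OF p q] by blast
    have "E q = T -` E p \<inter> space M"
      using XT measurable_space[OF T(1)] by (auto simp: E_def)
    then have "prob (E q) = measure (distr M M T) (E p)"
      by (simp add: measure_distr[OF T(1) E_sets[OF p]])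
    then show ?thesis using T(2) by simp
  qed
  have preimage: "prob (X -` C \<inter> space M) = (\<Sum>p\<in>C \<inter> A. prob (E p))" if C: "C \<in> sets N" for C
  proof -
    have "prob (X -` C \<inter> space M) = prob (\<Union>p\<in>C \<inter> A. E p)"
    proof (rule measure_eq_AE)
      show "AE x in M. (x \<in> X -` C \<inter> space M) = (x \<in> (\<Union>p\<in>C \<inter> A. E p))"
        using AE_A by eventually_elim (auto simp: E_def)
      show "(\<Union>p\<in>C \<inter> A. E p) \<in> events" using A(1) E_sets by auto
    qed (use measurable_sets[OF X C] in auto)
    also have "\<dots> = (\<Sum>p\<in>C \<inter> A. prob (E p))"
      using A(1) E_sets by (intro finite_measure_finite_Union) (auto simp: disjoint_family_on_def E_def)
    finally show ?thesis .
  qed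
  have "A \<subseteq> space N" using A(2) sets.sets_into_space by blast
  then have "space N \<inter> A = A" by blast
  moreover have "X -` space N \<inter> space M = space M" using measurable_space[OF X] by blast
  ultimately have "1 = (\<Sum>p\<in>A. prob (E p))"
    using preimage[OF sets.top] prob_space by simp
  then obtain p0 where p0: "p0 \<in> A" by fastforce
  have "1 = card A * prob (E p0)"
    using \<open>1 = _\<close> E_eq[OF p0] by simp
  then have "prob (E p0) = 1 / card A"
    by (metis nonzero_eq_divide_eq mult.commute mult_zero_left zero_neq_one)
  moreover have "prob (X -` B \<inter> space M) = card (B \<inter> A) * prob (E p0)"
    using preimage[OF B] E_eq[OF p0] by simp
  ultimately show ?thesis by simp
qed

lemma (in prob_space) indep_vars_if_uniform_on_PiE:
  assumes I: "finite I" "I \<noteq> {}"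
    and X: "X \<in> measurable M (PiM I N)"
    and D: "\<And>i. i \<in> I \<Longrightarrow> finite (D i)" "\<And>i. i \<in> I \<Longrightarrow> D i \<noteq> {}"
      "\<And>i. i \<in> I \<Longrightarrow> D i \<subseteq> space (N i)"
    and uniform: "\<And>B. B \<in> sets (PiM I N) \<Longrightarrow>
      prob (X -` B \<inter> space M) = card (B \<inter> PiE I D) / card (PiE I D)"
  shows "indep_vars N (\<lambda>i x. X x i) I"
proof -
  have X_space: "X x \<in> PiE I (\<lambda>i. space (N i))" if "x \<in> space M" for x
    using measurable_space[OF X that] by (simp add: space_PiM)
  have box: "prob (\<Inter>j\<in>I. (\<lambda>x. X x j) -` A j \<inter> space M) = (\<Prod>j\<in>I. card (A j \<inter> D j) / card (D j))"
    if A: "A \<in> (\<Pi> j\<in>I. sets (N j))" for A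
  proof -
    have "(\<Inter>j\<in>I. (\<lambda>x. X x j) -` A j \<inter> space M) = X -` PiE I A \<inter> space M"
      using X_space I(2) by (auto simp: PiE_iff)
    moreover have "PiE I A \<in> sets (PiM I N)" using A I(1) by (auto intro: sets_PiM_I_finite)
    moreover have "PiE I A \<inter> PiE I D = PiE I (\<lambda>j. A j \<inter> D j)" by (rule PiE_Int)
    ultimately show ?thesis
      using uniform I(1) by (simp add: card_PiE prod_dividef)
  qed
  have marginal: "prob ((\<lambda>x. X x j) -` A \<inter> space M) = card (A \<inter> D j) / card (D j)"
    if j: "j \<in> I" and A: "A \<in> sets (N j)" for j A
  proof -
    let ?A = "\<lambda>i. if i = j then A else space (N i)"
    have "(\<lambda>x. X x j) -` A \<inter> space M = (\<Inter>i\<in>I. (\<lambda>x. X x i) -` ?A i \<inter> space M)"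
      using X_space j by (auto simp: PiE_iff)
    also have "prob \<dots> = (\<Prod>i\<in>I. card (?A i \<inter> D i) / card (D i))"
      using A by (intro box) auto
    also have "\<dots> = (\<Prod>i\<in>I. if i = j then card (A \<inter> D j) / card (D j) else 1)"
      using D by (intro prod.cong) (auto simp: Int_absorb1)
    also have "\<dots> = card (A \<inter> D j) / card (D j)"
      using I(1) j by simp
    finally show ?thesis .
  qed
  show ?thesis
  proof (subst indep_vars_finite[where E = "\<lambda>i. sets (N i)"])
    show "\<And>i. i \<in> I \<Longrightarrow> random_variable (N i) (\<lambda>x. X x i)"
      using X by measurable
    show "\<forall>A\<in>(\<Pi> i\<in>I. sets (N i)). prob (\<Inter>j\<in>I. (\<lambda>x. X x j) -` A j \<inter> space M)
        = (\<Prod>j\<in>I. prob ((\<lambda>x. X x j) -` A j \<inter> space M))"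
    proof
      fix A assume A: "A \<in> (\<Pi> i\<in>I. sets (N i))"
      then show "prob (\<Inter>j\<in>I. (\<lambda>x. X x j) -` A j \<inter> space M)
          = (\<Prod>j\<in>I. prob ((\<lambda>x. X x j) -` A j \<inter> space M))"
        unfolding box[OF A] by (intro prod.cong) (auto simp: marginal Pi_iff)
    qed
  qed (use I in \<open>auto simp: sets.sigma_sets_eq sets.Int_stable dest: sets.sets_into_space\<close>)
qed

section \<open>Segments and rank patterns\<close>

locale changepoints =
  fixes \<tau> :: "nat \<Rightarrow> nat" and K n :: nat
  assumes tau0: "\<tau> 0 = 0" and tauK: "\<tau> (K + 1) = n"
    and tau_mono: "strict_mono_on {0..K+1} \<tau>"
begin

lemma tau_le_iff: "a \<le> K + 1 \<Longrightarrow> b \<le> K + 1 \<Longrightarrow> \<tau> a \<le> \<tau> b \<longleftrightarrow> a \<le> b"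
  using strict_mono_on_less_eq[OF tau_mono] by auto

lemma UN_seg_atMost: "m \<le> K + 1 \<Longrightarrow> (\<Union>k\<in>{1..m}. seg \<tau> k) = {0<..\<tau> m}"
proof (induction m)
  case 0
  then show ?case using tau0 by simp
next
  case (Suc m)
  have "\<tau> m \<le> \<tau> (Suc m)" using Suc.prems tau_le_iff by simp
  then have "{0<..\<tau> m} \<union> seg \<tau> (Suc m) = {0<..\<tau> (Suc m)}" by (auto simp: seg_def)
  moreover have "{1..Suc m} = insert (Suc m) {1..m}" by auto
  ultimately show ?case using Suc by auto
qed

lemma UN_segments: "(\<Union>k\<in>{1..K+1}. seg \<tau> k) = {1..n}"
  using UN_seg_atMost[of "K + 1"] tauK by auto

lemma disjoint_segments: "disjoint_family_on (seg \<tau>) {1..K+1}"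
proof -
  have "seg \<tau> a \<inter> seg \<tau> b = {}" if "a < b" "b \<le> K + 1" for a b
  proof -
    have "\<tau> a \<le> \<tau> (b - 1)" using that tau_le_iff by simp
    then show ?thesis by (auto simp: seg_def)
  qed
  then show ?thesis
    unfolding disjoint_family_on_def by (metis atLeastAtMost_iff inf_commute linorder_neqE)
qed

lemma finite_seg [simp]: "finite (seg \<tau> k)"
  by (simp add: seg_def)

lemma seg_subset: "k \<in> {1..K+1} \<Longrightarrow> seg \<tau> k \<subseteq> {1..n}"
  using UN_segments by blast

lemma segment_of_eq:
  assumes "k \<in> {1..K+1}" "i \<in> seg \<tau> k"
  shows "segment_of \<tau> K i = k"
  unfolding segment_of_def
proof (rule the_equality)
  fix k' assume "k' \<in> {1..K+1} \<and> i \<in> seg \<tau> k'"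
  then show "k' = k" using assms disjoint_segments unfolding disjoint_family_on_def by blast
qed (use assms in simp)

lemma segment_of_mem:
  assumes "i \<in> {1..n}"
  shows "segment_of \<tau> K i \<in> {1..K+1}" and "i \<in> seg \<tau> (segment_of \<tau> K i)"
proof -
  obtain k where "k \<in> {1..K+1}" "i \<in> seg \<tau> k" using assms UN_segments by blast
  then show "segment_of \<tau> K i \<in> {1..K+1}" and "i \<in> seg \<tau> (segment_of \<tau> K i)"
    using segment_of_eq by simp_all
qed

abbreviation rank_space :: "(nat \<Rightarrow> nat \<Rightarrow> nat) measure" where
  "rank_space \<equiv> PiM {1..K+1} (\<lambda>k. PiM (seg \<tau> k) (\<lambda>_. count_space UNIV))"

lemma space_rank_space: "space rank_space = PiE {1..K+1} (\<lambda>k. seg \<tau> k \<rightarrow>\<^sub>E UNIV)"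
  by (simp add: space_PiM)

lemma rank_space_eqI:
  assumes "p \<in> space rank_space" "p' \<in> space rank_space"
    and "\<And>k i. k \<in> {1..K+1} \<Longrightarrow> i \<in> seg \<tau> k \<Longrightarrow> p k i = p' k i"
  shows "p = p'"
proof -
  note p = assms(1)[unfolded space_rank_space] and p' = assms(2)[unfolded space_rank_space]
  have "p k = p' k" if k: "k \<in> {1..K+1}" for k
    using PiE_mem[OF p k] PiE_mem[OF p' k] assms(3)[OF k] by (rule PiE_ext)
  then show ?thesis using p p' by (rule PiE_ext[rotated 2])
qed

lemma singleton_in_sets_rank_space: "p \<in> space rank_space \<Longrightarrow> {p} \<in> sets rank_space"
  by (intro singleton_in_sets_PiM) (auto simp: space_PiM intro!: singleton_in_sets_PiM)

definition rank_patterns :: "nat \<Rightarrow> (nat \<Rightarrow> nat) set" where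
  "rank_patterns k = {r \<in> seg \<tau> k \<rightarrow>\<^sub>E UNIV. bij_betw r (seg \<tau> k) {1..card (seg \<tau> k)}}"

abbreviation joint_rank_patterns :: "(nat \<Rightarrow> nat \<Rightarrow> nat) set" where
  "joint_rank_patterns \<equiv> PiE {1..K+1} rank_patterns"

lemma finite_rank_patterns: "finite (rank_patterns k)"
proof (rule finite_subset)
  show "rank_patterns k \<subseteq> seg \<tau> k \<rightarrow>\<^sub>E {1..card (seg \<tau> k)}"
  proof
    fix r assume "r \<in> rank_patterns k"
    then have "r \<in> extensional (seg \<tau> k)" "bij_betw r (seg \<tau> k) {1..card (seg \<tau> k)}"
      by (simp_all add: rank_patterns_def PiE_iff)
    then show "r \<in> seg \<tau> k \<rightarrow>\<^sub>E {1..card (seg \<tau> k)}"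
      by (intro PiE_I bij_betw_apply[of r]) (auto simp: extensional_def)
  qed
qed (simp add: finite_PiE)

lemma rank_patterns_nonempty: "rank_patterns k \<noteq> {}"
proof -
  let ?r = "\<lambda>i. card {j \<in> seg \<tau> k. id j \<le> id i}"
  have "bij_betw ?r (seg \<tau> k) {1..card (seg \<tau> k)}"
    by (rule bij_betw_rank) simp_all
  then have "bij_betw (restrict ?r (seg \<tau> k)) (seg \<tau> k) {1..card (seg \<tau> k)}"
    by (rule bij_betw_cong[THEN iffD1, rotated]) simp
  then have "restrict ?r (seg \<tau> k) \<in> rank_patterns k"
    unfolding rank_patterns_def by simp
  then show ?thesis by blast
qed

lemma rank_patterns_subset_space: "rank_patterns k \<subseteq> space (PiM (seg \<tau> k) (\<lambda>_. count_space UNIV))"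
  by (auto simp: rank_patterns_def space_PiM)

lemma joint_rank_patterns_subset_space: "joint_rank_patterns \<subseteq> space rank_space"
  unfolding space_PiM[of "{1..K+1}"] using rank_patterns_subset_space by (rule PiE_mono)

definition segment_permutation :: "(nat \<Rightarrow> nat) \<Rightarrow> bool" where
  "segment_permutation \<pi> \<longleftrightarrow> \<pi> permutes {1..n} \<and> (\<forall>k\<in>{1..K+1}. bij_betw \<pi> (seg \<tau> k) (seg \<tau> k))"

lemma segment_permutationI:
  assumes "\<And>k. k \<in> {1..K+1} \<Longrightarrow> bij_betw \<pi> (seg \<tau> k) (seg \<tau> k)"
    and "\<And>i. i \<notin> {1..n} \<Longrightarrow> \<pi> i = i"
  shows "segment_permutation \<pi>"
proof -
  have "bij_betw \<pi> (\<Union>k\<in>{1..K+1}. seg \<tau> k) (\<Union>k\<in>{1..K+1}. seg \<tau> k)"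
    by (rule bij_betw_UNION_disjoint[OF disjoint_segments assms(1)])
  then have "bij_betw \<pi> {1..n} {1..n}" unfolding UN_segments .
  then show ?thesis
    using assms unfolding segment_permutation_def by (blast intro: bij_imp_permutes)
qed

lemma segment_permutation_bij:
  "segment_permutation \<pi> \<Longrightarrow> k \<in> {1..K+1} \<Longrightarrow> bij_betw \<pi> (seg \<tau> k) (seg \<tau> k)"
  by (simp add: segment_permutation_def)

lemma segment_permutation_segment_of:
  assumes "segment_permutation \<pi>" "i \<in> {1..n}"
  shows "segment_of \<tau> K (\<pi> i) = segment_of \<tau> K i"
proof -
  note k = segment_of_mem[OF assms(2)]
  have "\<pi> i \<in> seg \<tau> (segment_of \<tau> K i)"
    using segment_permutation_bij[OF assms(1) k(1)] k(2) by (rule bij_betw_apply)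
  then show ?thesis by (rule segment_of_eq[OF k(1)])
qed

definition permute_patterns :: "(nat \<Rightarrow> nat) \<Rightarrow> (nat \<Rightarrow> nat \<Rightarrow> nat) \<Rightarrow> nat \<Rightarrow> nat \<Rightarrow> nat" where
  "permute_patterns \<pi> p = (\<lambda>k\<in>{1..K+1}. \<lambda>i\<in>seg \<tau> k. p k (\<pi> i))"

lemma permute_patterns_in_space: "permute_patterns \<pi> p \<in> space rank_space"
  unfolding permute_patterns_def space_PiM by (simp add: restrict_PiE_iff)

lemma inj_on_permute_patterns:
  assumes "segment_permutation \<pi>"
  shows "inj_on (permute_patterns \<pi>) (space rank_space)"
proof (rule inj_onI)
  fix p p' assume p: "p \<in> space rank_space" and p': "p' \<in> space rank_space"
    and eq: "permute_patterns \<pi> p = permute_patterns \<pi> p'"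
  show "p = p'"
  proof (rule rank_space_eqI[OF p p'])
    fix k i assume k: "k \<in> {1..K+1}" and i: "i \<in> seg \<tau> k"
    have "i \<in> \<pi> ` seg \<tau> k"
      using bij_betw_imp_surj_on[OF segment_permutation_bij[OF assms k]] i by simp
    then obtain j where "j \<in> seg \<tau> k" "i = \<pi> j" by blast
    then show "p k i = p' k i"
      using fun_cong[OF fun_cong[OF eq, of k], of j] k by (simp add: permute_patterns_def)
  qed
qed

lemma permute_patterns_transitive:
  assumes p: "p \<in> joint_rank_patterns" and q: "q \<in> joint_rank_patterns"
  shows "\<exists>\<pi>. segment_permutation \<pi> \<and> permute_patterns \<pi> q = p"
proof -
  define \<pi> where "\<pi> i = (if i \<in> {1..n} then
      inv_into (seg \<tau> (segment_of \<tau> K i)) (q (segment_of \<tau> K i)) (p (segment_of \<tau> K i) i) else i)" for i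
  have bij_p: "bij_betw (p k) (seg \<tau> k) {1..card (seg \<tau> k)}"
    and bij_q: "bij_betw (q k) (seg \<tau> k) {1..card (seg \<tau> k)}" if "k \<in> {1..K+1}" for k
    using p q that by (auto simp: rank_patterns_def)
  have \<pi>_seg: "\<pi> i = inv_into (seg \<tau> k) (q k) (p k i)" if "k \<in> {1..K+1}" "i \<in> seg \<tau> k" for k i
  proof -
    have "i \<in> {1..n}" using seg_subset that by blast
    then show ?thesis by (simp add: \<pi>_def segment_of_eq[OF that])
  qed
  have bij_\<pi>: "bij_betw \<pi> (seg \<tau> k) (seg \<tau> k)" if k: "k \<in> {1..K+1}" for k
  proof -
    have "bij_betw (inv_into (seg \<tau> k) (q k) \<circ> p k) (seg \<tau> k) (seg \<tau> k)"
      using bij_betw_trans[OF bij_p[OF k] bij_betw_inv_into[OF bij_q[OF k]]] .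
    then show ?thesis by (rule bij_betw_cong[THEN iffD1, rotated]) (simp add: \<pi>_seg[OF k])
  qed
  have perm: "segment_permutation \<pi>"
  proof (rule segment_permutationI)
    show "\<pi> i = i" if "i \<notin> {1..n}" for i
      using that by (auto simp: \<pi>_def)
  qed (rule bij_\<pi>)
  have "permute_patterns \<pi> q = p"
  proof (rule rank_space_eqI[OF permute_patterns_in_space])
    show "p \<in> space rank_space"
      using p joint_rank_patterns_subset_space by blast
    fix k i assume k: "k \<in> {1..K+1}" and i: "i \<in> seg \<tau> k"
    have "p k i \<in> q k ` seg \<tau> k"
      using bij_betw_apply[OF bij_p[OF k] i] bij_q[OF k] by (simp add: bij_betw_def)
    then have "q k (\<pi> i) = p k i"
      unfolding \<pi>_seg[OF k i] by (rule f_inv_into_f)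
    then show "permute_patterns \<pi> q k i = p k i"
      using k i by (simp add: permute_patterns_def)
  qed
  with perm show ?thesis by blast
qed

definition concat_patterns :: "(nat \<Rightarrow> nat \<Rightarrow> nat) \<Rightarrow> nat \<Rightarrow> nat" where
  "concat_patterns p = (\<lambda>i\<in>{1..n}. p (segment_of \<tau> K i) i)"

lemma measurable_concat_patterns:
  "concat_patterns \<in> measurable rank_space (PiM {1..n} (\<lambda>_. count_space UNIV))"
  unfolding concat_patterns_def
proof (rule measurable_restrict)
  fix i assume "i \<in> {1..n}"
  have "(\<lambda>p. p (segment_of \<tau> K i)) \<in> measurable rank_space (PiM (seg \<tau> (segment_of \<tau> K i)) (\<lambda>_. count_space UNIV))"
    using segment_of_mem[OF \<open>i \<in> {1..n}\<close>] by (intro measurable_component_singleton)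
  moreover have "(\<lambda>r. r i) \<in> measurable (PiM (seg \<tau> (segment_of \<tau> K i)) (\<lambda>_. count_space UNIV)) (count_space UNIV)"
    using segment_of_mem[OF \<open>i \<in> {1..n}\<close>] by (intro measurable_component_singleton)
  ultimately show "(\<lambda>p. p (segment_of \<tau> K i) i) \<in> measurable rank_space (count_space UNIV)"
    by (rule measurable_compose)
qed

end

section \<open>The changepoint model\<close>

definition permute_coords :: "nat set \<Rightarrow> (nat \<Rightarrow> nat) \<Rightarrow> (nat \<Rightarrow> 'a) \<Rightarrow> nat \<Rightarrow> 'a" where
  "permute_coords I \<pi> x = (\<lambda>i\<in>I. x (\<pi> i))"

lemma measurable_permute_coords:
  assumes "\<pi> \<in> I \<rightarrow> I" "\<And>i. i \<in> I \<Longrightarrow> N (\<pi> i) = N i"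
  shows "permute_coords I \<pi> \<in> measurable (PiM I N) (PiM I N)"
  unfolding permute_coords_def
proof (rule measurable_restrict)
  fix i assume "i \<in> I"
  then have "(\<lambda>x. x (\<pi> i)) \<in> measurable (PiM I N) (N (\<pi> i))"
    using assms(1) by (intro measurable_component_singleton) auto
  then show "(\<lambda>x. x (\<pi> i)) \<in> measurable (PiM I N) (N i)"
    using assms(2)[OF \<open>i \<in> I\<close>] by simp
qed

lemma distr_permute_coords:
  assumes "\<pi> permutes I" "\<And>i. i \<in> I \<Longrightarrow> prob_space (N i)" "\<And>i. i \<in> I \<Longrightarrow> N (\<pi> i) = N i"
  shows "distr (PiM I N) (PiM I N) (permute_coords I \<pi>) = PiM I N"
proof -
  have "PiM I (\<lambda>i. N (\<pi> i)) = PiM I N"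
    using assms(3) by (rule PiM_cong[OF refl])
  moreover have "distr (PiM I N) (PiM I (\<lambda>i. N (\<pi> i))) (permute_coords I \<pi>) = PiM I (\<lambda>i. N (\<pi> i))"
    unfolding permute_coords_def using assms(1,2)
    by (intro distr_PiM_reindex) (auto simp: permutes_inj_on permutes_in_image)
  ultimately show ?thesis by simp
qed

abbreviation permute_sample :: "nat \<Rightarrow> (nat \<Rightarrow> nat) \<Rightarrow>
    (nat \<Rightarrow> 'z) \<times> (nat \<Rightarrow> real) \<Rightarrow> (nat \<Rightarrow> 'z) \<times> (nat \<Rightarrow> real)" where
  "permute_sample n \<pi> \<equiv> map_prod (permute_coords {1..n} \<pi>) (permute_coords {1..n} \<pi>)"

lemma
  assumes "\<pi> permutes {1..n}" "\<And>i. i \<in> {1..n} \<Longrightarrow> prob_space (L i)"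
    and "\<And>i. i \<in> {1..n} \<Longrightarrow> L (\<pi> i) = L i"
  shows measurable_permute_sample: "permute_sample n \<pi> \<in> measurable (sample_space n L) (sample_space n L)"
    and distr_permute_sample: "distr (sample_space n L) (sample_space n L) (permute_sample n \<pi>) = sample_space n L"
proof -
  let ?N = "PiM {1..n} (\<lambda>_. std_normal_distribution)"
  have \<pi>: "\<pi> \<in> {1..n} \<rightarrow> {1..n}" using permutes_in_image[OF assms(1)] by blast
  have f: "permute_coords {1..n} \<pi> \<in> measurable (PiM {1..n} L) (PiM {1..n} L)"
    using \<pi> assms(3) by (rule measurable_permute_coords)
  have g: "permute_coords {1..n} \<pi> \<in> measurable ?N ?N"
    using \<pi> by (rule measurable_permute_coords) simp
  show "permute_sample n \<pi> \<in> measurable (sample_space n L) (sample_space n L)"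
    unfolding sample_space_def map_prod_def using f g by measurable
  have N: "distr ?N ?N (permute_coords {1..n} \<pi>) = ?N"
    using assms(1) by (rule distr_permute_coords) (simp_all add: prob_space_normal_density)
  have "sigma_finite_measure ?N"
    by (intro prob_space_imp_sigma_finite prob_space_PiM) (simp add: prob_space_normal_density)
  then have "distr (PiM {1..n} L) (PiM {1..n} L) (permute_coords {1..n} \<pi>) \<Otimes>\<^sub>M distr ?N ?N (permute_coords {1..n} \<pi>)
      = distr (sample_space n L) (sample_space n L) (permute_sample n \<pi>)"
    unfolding sample_space_def map_prod_def by (intro pair_measure_distr[OF f g]) (simp only: N)
  then show "distr (sample_space n L) (sample_space n L) (permute_sample n \<pi>) = sample_space n L"
    by (simp only: distr_permute_coords[of \<pi> _ L, OF assms] N sample_space_def)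
qed

lemma score_permute_sample:
  assumes "symmetric_transformation M n S" "\<pi> permutes {1..n}"
    and "fst \<omega> \<in> extensional {1..n}" "i \<in> {1..n}"
  shows "score S \<epsilon> (permute_sample n \<pi> \<omega>) i = score S \<epsilon> \<omega> (\<pi> i)"
proof -
  have "permute_coords {1..n} \<pi> (fst \<omega>) = fst \<omega> \<circ> \<pi>"
    using assms(2,3) by (auto simp: permute_coords_def fun_eq_iff extensional_def permutes_not_in)
  moreover have "S z (fst \<omega> \<circ> \<pi>) = S z (fst \<omega>)" for z
    using assms(1,2) unfolding symmetric_transformation_def by blast
  ultimately show ?thesis
    using assms(4) by (simp add: score_def permute_coords_def map_prod_def split_beta)
qed

locale changepoint_model = changepoints +
  fixes M :: "'z measure" and S :: "'z \<Rightarrow> (nat \<Rightarrow> 'z) \<Rightarrow> real" and \<epsilon> :: real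
    and P :: "nat \<Rightarrow> 'z measure"
  assumes P_prob: "\<And>k. k \<in> {1..K+1} \<Longrightarrow> prob_space (P k)"
    and P_sets: "\<And>k. k \<in> {1..K+1} \<Longrightarrow> sets (P k) = sets M"
    and S_sym: "symmetric_transformation M n S"
    and eps: "\<epsilon> > 0"
begin

abbreviation \<Omega> :: "((nat \<Rightarrow> 'z) \<times> (nat \<Rightarrow> real)) measure" where
  "\<Omega> \<equiv> sample_space n (\<lambda>i. P (segment_of \<tau> K i))"

lemma prob_space_segment_law: "i \<in> {1..n} \<Longrightarrow> prob_space (P (segment_of \<tau> K i))"
  using P_prob segment_of_mem by blast

lemma sets_segment_law: "i \<in> {1..n} \<Longrightarrow> sets (P (segment_of \<tau> K i)) = sets M"
  using P_sets segment_of_mem by blast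

lemma space_data: "space (PiM {1..n} (\<lambda>i. P (segment_of \<tau> K i))) = PiE {1..n} (\<lambda>_. space M)"
  unfolding space_PiM using sets_segment_law by (intro PiE_cong sets_eq_imp_space_eq)

sublocale prob_space \<Omega>
  unfolding sample_space_def
  by (intro prob_space_pair prob_space_PiM prob_space_segment_law) (simp_all add: prob_space_normal_density)

lemma space_\<Omega>: "space \<Omega> = PiE {1..n} (\<lambda>_. space M) \<times> PiE {1..n} (\<lambda>_. UNIV)"
  unfolding sample_space_def space_pair_measure space_data by (simp add: space_PiM)

lemma measurable_data: "fst \<in> measurable \<Omega> (PiM {1..n} (\<lambda>_. M))"
proof -
  have "fst \<in> measurable \<Omega> (PiM {1..n} (\<lambda>i. P (segment_of \<tau> K i)))"
    unfolding sample_space_def by (rule measurable_fst)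
  moreover have "measurable \<Omega> (PiM {1..n} (\<lambda>i. P (segment_of \<tau> K i))) = measurable \<Omega> (PiM {1..n} (\<lambda>_. M))"
    by (intro measurable_cong_sets refl sets_PiM_cong sets_segment_law)
  ultimately show ?thesis by simp
qed

lemma measurable_score: "i \<in> {1..n} \<Longrightarrow> (\<lambda>\<omega>. score S \<epsilon> \<omega> i) \<in> borel_measurable \<Omega>"
proof -
  assume i: "i \<in> {1..n}"
  have S: "(\<lambda>(z, D). S z D) \<in> borel_measurable (M \<Otimes>\<^sub>M PiM {1..n} (\<lambda>_. M))"
    using S_sym unfolding symmetric_transformation_def by blast
  have "(\<lambda>\<omega>. fst \<omega> i) \<in> measurable \<Omega> M"
    using measurable_compose[OF measurable_data measurable_component_singleton[OF i]] .
  then have "(\<lambda>\<omega>. (fst \<omega> i, fst \<omega>)) \<in> measurable \<Omega> (M \<Otimes>\<^sub>M PiM {1..n} (\<lambda>_. M))"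
    using measurable_data by (rule measurable_Pair)
  from measurable_compose[OF this S]
  have "(\<lambda>\<omega>. S (fst \<omega> i) (fst \<omega>)) \<in> borel_measurable \<Omega>" by simp
  moreover have "(\<lambda>\<omega>. snd \<omega> i) \<in> borel_measurable \<Omega>"
    unfolding sample_space_def using i by measurable
  ultimately show ?thesis unfolding score_def by measurable
qed

lemma AE_score_neq:
  assumes i: "i \<in> {1..n}" and j: "j \<in> {1..n}" and "i \<noteq> j"
  shows "AE \<omega> in \<Omega>. score S \<epsilon> \<omega> i \<noteq> score S \<epsilon> \<omega> j"
proof (rule AE_I')
  define T where "T = {\<omega> \<in> space \<Omega>. score S \<epsilon> \<omega> i = score S \<epsilon> \<omega> j}"
  show "{\<omega> \<in> space \<Omega>. \<not> score S \<epsilon> \<omega> i \<noteq> score S \<epsilon> \<omega> j} \<subseteq> T" by (auto simp: T_def)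
  have T_sets: "T \<in> sets \<Omega>"
    unfolding T_def using measurable_score[OF i] measurable_score[OF j] by measurable
  let ?N = "PiM {1..n} (\<lambda>_. std_normal_distribution)"
  interpret N: prob_space ?N
    by (intro prob_space_PiM) (simp add: prob_space_normal_density)
  have "emeasure \<Omega> T = (\<integral>\<^sup>+Z. emeasure ?N (Pair Z -` T) \<partial>PiM {1..n} (\<lambda>i. P (segment_of \<tau> K i)))"
    using T_sets unfolding sample_space_def by (rule N.emeasure_pair_measure_alt)
  also have "\<dots> = (\<integral>\<^sup>+Z. 0 \<partial>PiM {1..n} (\<lambda>i. P (segment_of \<tau> K i)))"
  proof (rule nn_integral_cong)
    fix Z assume "Z \<in> space (PiM {1..n} (\<lambda>i. P (segment_of \<tau> K i)))"
    \<comment> \<open>Given the data, a tie forces the noise onto a shifted diagonal, which is null.\<close>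
    then have "Pair Z -` T = {e \<in> space ?N. e i = e j + (S (Z j) Z - S (Z i) Z) / \<epsilon>}"
      using eps unfolding T_def space_\<Omega> space_data by (auto simp: score_def space_PiM field_simps)
    moreover have "sets std_normal_distribution = sets borel" by simp
    ultimately show "emeasure ?N (Pair Z -` T) = 0"
      using PiM_shifted_diagonal_null[OF _ i j \<open>i \<noteq> j\<close> prob_space_normal_density]
        emeasure_std_normal_singleton by (simp add: null_sets_def)
  qed
  also have "\<dots> = 0" by simp
  finally show "T \<in> null_sets \<Omega>" using T_sets by (rule null_setsI)
qed

lemma AE_inj_on_score: "AE \<omega> in \<Omega>. inj_on (score S \<epsilon> \<omega>) {1..n}"
proof -
  have "AE \<omega> in \<Omega>. \<forall>i\<in>{1..n}. \<forall>j\<in>{1..n}. i \<noteq> j \<longrightarrow> score S \<epsilon> \<omega> i \<noteq> score S \<epsilon> \<omega> j"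
  proof (intro AE_finite_allI)
    fix i j assume "i \<in> {1..n}" "j \<in> {1..n}"
    then show "AE \<omega> in \<Omega>. i \<noteq> j \<longrightarrow> score S \<epsilon> \<omega> i \<noteq> score S \<epsilon> \<omega> j"
      using AE_score_neq by (cases "i = j") auto
  qed simp_all
  then show ?thesis by eventually_elim (auto simp: inj_on_def)
qed

definition joint_rank :: "(nat \<Rightarrow> 'z) \<times> (nat \<Rightarrow> real) \<Rightarrow> nat \<Rightarrow> nat \<Rightarrow> nat" where
  "joint_rank \<omega> = (\<lambda>k\<in>{1..K+1}. rank_vec S \<epsilon> \<tau> k \<omega>)"

lemma measurable_seg_rank:
  assumes k: "k \<in> {1..K+1}" and i: "i \<in> seg \<tau> k"
  shows "(\<lambda>\<omega>. seg_rank S \<epsilon> \<tau> k \<omega> i) \<in> measurable \<Omega> (count_space UNIV)"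
  unfolding seg_rank_def
proof (rule measurable_card)
  fix j
  show "{\<omega> \<in> space \<Omega>. j \<in> {j \<in> seg \<tau> k. score S \<epsilon> \<omega> j \<le> score S \<epsilon> \<omega> i}} \<in> sets \<Omega>"
  proof (cases "j \<in> seg \<tau> k")
    case True
    then have "i \<in> {1..n}" "j \<in> {1..n}" using seg_subset[OF k] i by auto
    with True show ?thesis using measurable_score by simp
  qed simp
qed

lemma measurable_rank_vec:
  "k \<in> {1..K+1} \<Longrightarrow> rank_vec S \<epsilon> \<tau> k \<in> measurable \<Omega> (PiM (seg \<tau> k) (\<lambda>_. count_space UNIV))"
  unfolding rank_vec_def by (intro measurable_restrict measurable_seg_rank)

lemma measurable_joint_rank: "joint_rank \<in> measurable \<Omega> rank_space"
  unfolding joint_rank_def by (intro measurable_restrict measurable_rank_vec)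

lemma joint_rank_in_patterns:
  assumes "inj_on (score S \<epsilon> \<omega>) {1..n}"
  shows "joint_rank \<omega> \<in> joint_rank_patterns"
proof -
  have "rank_vec S \<epsilon> \<tau> k \<omega> \<in> rank_patterns k" if k: "k \<in> {1..K+1}" for k
  proof -
    have "bij_betw (seg_rank S \<epsilon> \<tau> k \<omega>) (seg \<tau> k) {1..card (seg \<tau> k)}"
      unfolding seg_rank_def using inj_on_subset[OF assms seg_subset[OF k]]
      by (intro bij_betw_rank) simp_all
    then show ?thesis by (simp add: rank_patterns_def rank_vec_def)
  qed
  then show ?thesis by (simp add: joint_rank_def restrict_PiE_iff)
qed

lemma joint_rank_permute_sample:
  assumes \<pi>: "segment_permutation \<pi>" and \<omega>: "\<omega> \<in> space \<Omega>"
  shows "joint_rank (permute_sample n \<pi> \<omega>) = permute_patterns \<pi> (joint_rank \<omega>)"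
proof -
  have "fst \<omega> \<in> extensional {1..n}" using \<omega> by (auto simp: space_\<Omega> PiE_iff)
  then have score: "score S \<epsilon> (permute_sample n \<pi> \<omega>) i = score S \<epsilon> \<omega> (\<pi> i)" if "i \<in> {1..n}" for i
    using S_sym \<pi> that by (intro score_permute_sample) (auto simp: segment_permutation_def)
  have "seg_rank S \<epsilon> \<tau> k (permute_sample n \<pi> \<omega>) i = seg_rank S \<epsilon> \<tau> k \<omega> (\<pi> i)"
    if k: "k \<in> {1..K+1}" and i: "i \<in> seg \<tau> k" for k i
  proof -
    have score_k: "score S \<epsilon> (permute_sample n \<pi> \<omega>) j = score S \<epsilon> \<omega> (\<pi> j)" if "j \<in> seg \<tau> k" for j
      using score seg_subset[OF k] that by blast
    have "{j \<in> seg \<tau> k. score S \<epsilon> (permute_sample n \<pi> \<omega>) j \<le> score S \<epsilon> (permute_sample n \<pi> \<omega>) i}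
        = {j \<in> seg \<tau> k. score S \<epsilon> \<omega> (\<pi> j) \<le> score S \<epsilon> \<omega> (\<pi> i)}"
      using score_k score_k[OF i] by auto
    then show ?thesis
      unfolding seg_rank_def using card_filter_bij_betw[OF segment_permutation_bij[OF \<pi> k]] by simp
  qed
  moreover have "\<pi> i \<in> seg \<tau> k" if "k \<in> {1..K+1}" "i \<in> seg \<tau> k" for k i
    using segment_permutation_bij[OF \<pi> that(1)] that(2) by (rule bij_betw_apply)
  ultimately show ?thesis
    unfolding joint_rank_def permute_patterns_def rank_vec_def by (auto intro!: restrict_ext)
qed

lemma prob_joint_rank:
  assumes "B \<in> sets rank_space"
  shows "prob (joint_rank -` B \<inter> space \<Omega>) = card (B \<inter> joint_rank_patterns) / card joint_rank_patterns"
proof (rule prob_vimage_uniform_by_symmetry[OF _ _ measurable_joint_rank _ _ assms])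
  show "finite joint_rank_patterns" by (intro finite_PiE finite_rank_patterns) simp
  show "{p} \<in> sets rank_space" if "p \<in> joint_rank_patterns" for p
    using that joint_rank_patterns_subset_space singleton_in_sets_rank_space by blast
  show "AE \<omega> in \<Omega>. joint_rank \<omega> \<in> joint_rank_patterns"
    using AE_inj_on_score by eventually_elim (rule joint_rank_in_patterns)
  fix p q assume p: "p \<in> joint_rank_patterns" and q: "q \<in> joint_rank_patterns"
  obtain \<pi> where \<pi>: "segment_permutation \<pi>" and \<pi>q: "permute_patterns \<pi> q = p"
    using permute_patterns_transitive[OF p q] by blast
  have perm: "\<pi> permutes {1..n}" using \<pi> by (simp add: segment_permutation_def)
  have law: "P (segment_of \<tau> K (\<pi> i)) = P (segment_of \<tau> K i)" if "i \<in> {1..n}" for i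
    using segment_permutation_segment_of[OF \<pi> that] by (rule arg_cong)
  show "\<exists>T\<in>measurable \<Omega> \<Omega>. distr \<Omega> \<Omega> T = \<Omega> \<and> (\<forall>\<omega>\<in>space \<Omega>. joint_rank (T \<omega>) = p \<longleftrightarrow> joint_rank \<omega> = q)"
  proof (intro bexI conjI ballI)
    show "permute_sample n \<pi> \<in> measurable \<Omega> \<Omega>"
      using perm prob_space_segment_law law by (rule measurable_permute_sample)
    show "distr \<Omega> \<Omega> (permute_sample n \<pi>) = \<Omega>"
      using perm prob_space_segment_law law by (rule distr_permute_sample)
    fix \<omega> assume \<omega>: "\<omega> \<in> space \<Omega>"
    have "joint_rank \<omega> \<in> space rank_space" "q \<in> space rank_space"
      using measurable_space[OF measurable_joint_rank \<omega>] q joint_rank_patterns_subset_space by auto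
    then show "joint_rank (permute_sample n \<pi> \<omega>) = p \<longleftrightarrow> joint_rank \<omega> = q"
      unfolding joint_rank_permute_sample[OF \<pi> \<omega>] \<pi>q[symmetric]
      by (rule inj_on_eq_iff[OF inj_on_permute_patterns[OF \<pi>]])
  qed
qed

lemma indep_vars_rank_vec:
  "indep_vars (\<lambda>k. PiM (seg \<tau> k) (\<lambda>_. count_space UNIV)) (\<lambda>k. rank_vec S \<epsilon> \<tau> k) {1..K+1}"
proof -
  have "indep_vars (\<lambda>k. PiM (seg \<tau> k) (\<lambda>_. count_space UNIV)) (\<lambda>k \<omega>. joint_rank \<omega> k) {1..K+1}"
    using measurable_joint_rank finite_rank_patterns rank_patterns_nonempty rank_patterns_subset_space
      prob_joint_rank by (intro indep_vars_if_uniform_on_PiE) auto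
  moreover have "indep_vars (\<lambda>k. PiM (seg \<tau> k) (\<lambda>_. count_space UNIV)) (\<lambda>k \<omega>. joint_rank \<omega> k) {1..K+1}
      \<longleftrightarrow> indep_vars (\<lambda>k. PiM (seg \<tau> k) (\<lambda>_. count_space UNIV)) (\<lambda>k. rank_vec S \<epsilon> \<tau> k) {1..K+1}"
    by (rule indep_vars_cong) (auto simp: joint_rank_def fun_eq_iff)
  ultimately show ?thesis by blast
qed

lemma concat_rank_eq: "concat_rank S \<epsilon> \<tau> K n \<omega> = concat_patterns (joint_rank \<omega>)"
  unfolding concat_rank_def concat_patterns_def
proof (rule restrict_ext)
  fix i assume "i \<in> {1..n}"
  then show "seg_rank S \<epsilon> \<tau> (segment_of \<tau> K i) \<omega> i = joint_rank \<omega> (segment_of \<tau> K i) i"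
    using segment_of_mem[of i] by (simp add: joint_rank_def rank_vec_def)
qed

lemma distr_concat_rank:
  "distr \<Omega> (PiM {1..n} (\<lambda>_. count_space UNIV)) (concat_rank S \<epsilon> \<tau> K n)
    = distr (distr \<Omega> rank_space joint_rank) (PiM {1..n} (\<lambda>_. count_space UNIV)) concat_patterns"
  using distr_distr[OF measurable_concat_patterns measurable_joint_rank]
  by (simp add: comp_def concat_rank_eq[abs_def])

lemma emeasure_distr_joint_rank:
  assumes "B \<in> sets rank_space"
  shows "emeasure (distr \<Omega> rank_space joint_rank) B = card (B \<inter> joint_rank_patterns) / card joint_rank_patterns"
  unfolding emeasure_distr[OF measurable_joint_rank assms] emeasure_eq_measure prob_joint_rank[OF assms] ..

end

lemma distr_concat_rank_eq:
  assumes "changepoint_model \<tau> K n M S \<epsilon> P" and "changepoint_model \<tau> K n M S \<epsilon> P'"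
  shows "distr (sample_space n (\<lambda>i. P (segment_of \<tau> K i))) (PiM {1..n} (\<lambda>_. count_space UNIV))
           (concat_rank S \<epsilon> \<tau> K n)
       = distr (sample_space n (\<lambda>i. P' (segment_of \<tau> K i))) (PiM {1..n} (\<lambda>_. count_space UNIV))
           (concat_rank S \<epsilon> \<tau> K n)"
proof -
  interpret m: changepoint_model \<tau> K n M S \<epsilon> P by fact
  interpret m': changepoint_model \<tau> K n M S \<epsilon> P' by fact
  have "distr m.\<Omega> m.rank_space m.joint_rank = distr m'.\<Omega> m.rank_space m'.joint_rank"
  proof (rule measure_eqI)
    fix B assume "B \<in> sets (distr m.\<Omega> m.rank_space m.joint_rank)"
    then have B: "B \<in> sets m.rank_space" by simp
    show "emeasure (distr m.\<Omega> m.rank_space m.joint_rank) B = emeasure (distr m'.\<Omega> m.rank_space m'.joint_rank) B"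
      unfolding m.emeasure_distr_joint_rank[OF B] m'.emeasure_distr_joint_rank[OF B] ..
  qed simp
  then show ?thesis by (simp only: m.distr_concat_rank m'.distr_concat_rank)
qed

theorem lemmaS2:
  fixes M :: "'z measure" and n K :: nat and \<tau> :: "nat \<Rightarrow> nat"
    and P :: "nat \<Rightarrow> 'z measure" and S :: "'z \<Rightarrow> (nat \<Rightarrow> 'z) \<Rightarrow> real" and \<epsilon> :: real
  assumes tau0: "\<tau> 0 = 0" and tauK: "\<tau> (K + 1) = n"
    and tau_mono: "strict_mono_on {0..K+1} \<tau>"
    and P_prob: "\<And>k. k \<in> {1..K+1} \<Longrightarrow> prob_space (P k)"
    and P_sets: "\<And>k. k \<in> {1..K+1} \<Longrightarrow> sets (P k) = sets M"
    and P_change: "\<And>k. k \<in> {1..K} \<Longrightarrow> P (k + 1) \<noteq> P k"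
    and S_sym: "symmetric_transformation M n S"
    and eps: "\<epsilon> > 0"
  shows "prob_space.indep_vars (sample_space n (\<lambda>i. P (segment_of \<tau> K i)))
           (\<lambda>k. PiM (seg \<tau> k) (\<lambda>_. count_space UNIV))
           (\<lambda>k. rank_vec S \<epsilon> \<tau> k) {1..K+1} \<and>
         (\<forall>Q.  prob_space Q \<longrightarrow> sets Q = sets M \<longrightarrow>
           distr (sample_space n (\<lambda>i. P (segment_of \<tau> K i))) (PiM {1..n} (\<lambda>_. count_space UNIV))
                 (concat_rank S \<epsilon> \<tau> K n)
         = distr (sample_space n (\<lambda>_. Q)) (PiM {1..n} (\<lambda>_. count_space UNIV))
                 (concat_rank S \<epsilon> \<tau> K n))"
proof -
  have model: "changepoint_model \<tau> K n M S \<epsilon> L"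
    if "\<And>k. k \<in> {1..K+1} \<Longrightarrow> prob_space (L k)" "\<And>k. k \<in> {1..K+1} \<Longrightarrow> sets (L k) = sets M" for L
    unfolding changepoint_model_def changepoints_def changepoint_model_axioms_def
    using tau0 tauK tau_mono that S_sym eps by blast
  interpret changepoint_model \<tau> K n M S \<epsilon> P
    using P_prob P_sets by (rule model)
  have "distr \<Omega> (PiM {1..n} (\<lambda>_. count_space UNIV)) (concat_rank S \<epsilon> \<tau> K n)
      = distr (sample_space n (\<lambda>_. Q)) (PiM {1..n} (\<lambda>_. count_space UNIV)) (concat_rank S \<epsilon> \<tau> K n)"
    if "prob_space Q" "sets Q = sets M" for Q
    using distr_concat_rank_eq[OF model[OF P_prob P_sets] model[of "\<lambda>_. Q"]] that by simp
  then show ?thesis using indep_vars_rank_vec by blast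
qed

end
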